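(* Let $K$ be a CMI in pure form. Then $K=(\cdot,\langle\ \rangle)$ (i.e., $K$ is degenerate) if and only if $\mathrm{can}(K)=(\cdot,\langle\ \rangle)$.
   Context: Setting: $X_1,\dots,X_n$ jointly distributed discrete random variables with $H(X_i)<\infty$; distribution unspecified. $X_\alpha=(X_i,i\in\alpha)$, $X_\emptyset$ constant. A CMI is $K=(C,\langle Q_1,\dots,Q_k\rangle)$, $k\ge0$, $C\subseteq\{1,\dots,n\}$, $\langle\cdot\rangle$ an unordered multiset of subsets; valid (for a given distribution) if $\sum_iH(X_{Q_i}|X_C)-H(X_{Q_1},\dots,X_{Q_k}|X_C)=0$. Empty members may be deleted. $K$ is degenerate if it is valid for every joint distribution; all degenerate CMIs are identified and written $(\cdot,\langle\ \rangle)$. Pure form: all $Q_i\ne\emptyset$ and $Q_i\cap C=\emptyset$. Canonical form of pure $K$: $\mathbb I_K$ = indices lying in at least two members (distinct positions) of the collection if $k\ge2$, else $\emptyset$; $P_1,\dots,P_t$ the nonempty sets among $Q_i\setminus\mathbb I_K$; $\mathrm{can}(K)=(\cdot,\langle\ \rangle)$ if $k\le1$; $(C,\langle\mathbb I_K,\mathbb I_K\rangle)$ if $k\ge2,\mathbb I_K\ne\emptyset,t\le1$; $(C,\langle P_1,\dots,P_t\rangle)$ if $k\ge2,\mathbb I_K=\emptyset$; $(C,\langle\mathbb I_K,\mathbb I_K,P_1,\dots,P_t\rangle)$ if $k\ge2,\mathbb I_K\ne\emptyset,t\ge2$. *)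

theory Defs
  imports "HOL-Probability.Probability" "HOL-Library.Multiset"
begin

text \<open>A joint distribution of discrete random variables X_1, ..., X_n is modelled as a
  probability mass function on assignments (index \<Rightarrow> value); values are taken in nat
  (any countable value set can be relabelled injectively into nat without changing entropies).
  Coordinates outside {1..n} are irrelevant.\<close>

type_synonym joint = "(nat \<Rightarrow> nat) pmf"

definition marg :: "joint \<Rightarrow> nat set \<Rightarrow> (nat \<Rightarrow> nat) pmf" where
  "marg p \<alpha> = map_pmf (\<lambda>x. restrict x \<alpha>) p"

definition entropy_pmf :: "'b pmf \<Rightarrow> real" where
  "entropy_pmf q = - (\<Sum>\<^sub>\<infinity>x. pmf q x * log 2 (pmf q x))"

definition finite_entropy :: "'b pmf \<Rightarrow> bool" where
  "finite_entropy q \<longleftrightarrow> (\<lambda>x. pmf q x * log 2 (pmf q x)) summable_on UNIV"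

definition H :: "joint \<Rightarrow> nat set \<Rightarrow> real" where
  "H p \<alpha> = entropy_pmf (marg p \<alpha>)"

definition Hc :: "joint \<Rightarrow> nat set \<Rightarrow> nat set \<Rightarrow> real" where
  "Hc p A C = H p (A \<union> C) - H p C"

text \<open>A CMI: conditioning set C and a multiset of index sets Q_1..Q_k.\<close>
type_synonym cmi = "nat set \<times> nat set multiset"

definition admissible :: "nat \<Rightarrow> joint \<Rightarrow> bool" where
  "admissible n p \<longleftrightarrow> (\<forall>i\<in>{1..n}. finite_entropy (marg p {i}))"

definition valid :: "joint \<Rightarrow> cmi \<Rightarrow> bool" where
  "valid p K \<longleftrightarrow>
     (let C = fst K; Qs = snd K in
       (\<Sum>Q\<in>#Qs. Hc p Q C) - Hc p (\<Union>Q\<in>set_mset Qs. Q) C = 0)"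

definition cmi_on :: "nat \<Rightarrow> cmi \<Rightarrow> bool" where
  "cmi_on n K \<longleftrightarrow> fst K \<subseteq> {1..n} \<and> (\<forall>Q\<in>#snd K. Q \<subseteq> {1..n})"

definition degenerate :: "nat \<Rightarrow> cmi \<Rightarrow> bool" where
  "degenerate n K \<longleftrightarrow> (\<forall>p. admissible n p \<longrightarrow> valid p K)"

definition pure :: "cmi \<Rightarrow> bool" where
  "pure K \<longleftrightarrow> (\<forall>Q\<in>#snd K. Q \<noteq> {} \<and> Q \<inter> fst K = {})"

definition IK :: "cmi \<Rightarrow> nat set" where
  "IK K = (if size (snd K) \<ge> 2
           then {i. size (filter_mset (\<lambda>Q. i \<in> Q) (snd K)) \<ge> 2} else {})"

definition PK :: "cmi \<Rightarrow> nat set multiset" where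
  "PK K = filter_mset (\<lambda>P. P \<noteq> {}) (image_mset (\<lambda>Q. Q - IK K) (snd K))"

text \<open>Canonical form; None represents the degenerate symbol (., < >).\<close>
definition can :: "cmi \<Rightarrow> cmi option" where
  "can K = (let C = fst K; I = IK K; P = PK K in
     if size (snd K) \<le> 1 then None
     else if I \<noteq> {} \<and> size P \<le> 1 then Some (C, {#I, I#})
     else if I = {} then Some (C, P)
     else Some (C, {#I, I#} + P))"

text \<open>Equality with the degenerate symbol (., < >): since all degenerate CMIs are
  identified with it, an element of cmi option equals it iff it is None or a degenerate CMI.\<close>
definition is_degenerate_symbol :: "nat \<Rightarrow> cmi option \<Rightarrow> bool" where
  "is_degenerate_symbol n K' \<longleftrightarrow> (case K' of None \<Rightarrow> True | Some K'' \<Rightarrow> degenerate n K'')"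

end

theory Submission
  imports Defs
begin

text \<open>A pure CMI with at most one member is valid for trivial reasons. Conversely, let X be a fair
  coin and set X_i = X for i outside C and X_i = 0 for i in C. Then H(X_Q | X_C) = 1 for every
  nonempty Q disjoint from C, so a pure CMI with k \<ge> 2 members has defect k - 1 \<noteq> 0 and is
  not degenerate. Hence a pure CMI is degenerate iff k \<le> 1, and the canonical form of a pure
  CMI with k \<ge> 2 is again a pure CMI with at least two members.\<close>

lemma entropy_pmf_of_set:
  assumes "finite S" "S \<noteq> {}"
  shows "entropy_pmf (pmf_of_set S) = log 2 (card S)"
proof -
  let ?f = "\<lambda>x. pmf (pmf_of_set S) x * log 2 (pmf (pmf_of_set S) x)"
  have "infsum ?f UNIV = infsum ?f S"
    using assms by (intro infsum_cong_neutral) auto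
  also have "\<dots> = (\<Sum>x\<in>S. 1 / card S * log 2 (1 / card S))"
    using assms by simp
  also have "\<dots> = - log 2 (card S)"
    using assms by (simp add: log_divide card_gt_0_iff)
  finally show ?thesis
    unfolding entropy_pmf_def by simp
qed

lemma finite_entropy_pmf_of_set:
  assumes "finite S" "S \<noteq> {}"
  shows "finite_entropy (pmf_of_set S)"
proof -
  let ?f = "\<lambda>x. pmf (pmf_of_set S) x * log 2 (pmf (pmf_of_set S) x)"
  have "?f summable_on S"
    using assms by simp
  then show ?thesis
    unfolding finite_entropy_def using assms
    by (subst summable_on_cong_neutral[of S UNIV ?f ?f]) auto
qed

lemma map_pmf_of_set_pair: "map_pmf f (pmf_of_set {u, v}) = pmf_of_set {f u, f v}"
proof (cases "f u = f v")
  case True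
  have "map_pmf f (pmf_of_set {u, v}) = map_pmf (\<lambda>_. f u) (pmf_of_set {u, v})"
    by (rule map_pmf_cong) (auto simp: True)
  then show ?thesis
    by (simp add: True map_pmf_const pmf_of_set_singleton)
next
  case False
  then have "inj_on f {u, v}"
    by auto
  then show ?thesis
    by (simp add: map_pmf_of_set_inj)
qed

definition coin_outside :: "nat set \<Rightarrow> joint" where
  "coin_outside C = pmf_of_set {\<lambda>_. 0, \<lambda>i. if i \<in> C then 0 else 1}"

lemma marg_coin_outside:
  "marg (coin_outside C) A =
     pmf_of_set {restrict (\<lambda>_. 0) A, restrict (\<lambda>i. if i \<in> C then 0 else 1) A}"
  unfolding marg_def coin_outside_def by (rule map_pmf_of_set_pair)

lemma H_coin_outside: "H (coin_outside C) A = (if A \<subseteq> C then 0 else 1)"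
proof -
  have "restrict (\<lambda>_. 0::nat) A = restrict (\<lambda>i. if i \<in> C then 0 else 1) A \<longleftrightarrow> A \<subseteq> C"
    by (auto simp: restrict_def fun_eq_iff split: if_splits)
  then show ?thesis
    unfolding H_def marg_coin_outside
    by (subst entropy_pmf_of_set) auto
qed

lemma admissible_coin_outside: "admissible n (coin_outside C)"
  unfolding admissible_def marg_coin_outside
  by (auto intro: finite_entropy_pmf_of_set)

lemma Hc_coin_outside: "Hc (coin_outside C) A C = (if A \<subseteq> C then 0 else 1)"
  by (simp add: Hc_def H_coin_outside)

lemma degenerate_if_size_le_1:
  assumes "size (snd K) \<le> 1"
  shows "degenerate n K"
proof -
  obtain C M where K: "K = (C, M)"
    by (cases K)
  have "M = {#} \<or> (\<exists>Q. M = {#Q#})"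
    using assms K by (cases M) (auto simp: size_eq_0_iff_empty)
  then show ?thesis
    unfolding degenerate_def valid_def K by (auto simp: Hc_def)
qed

lemma pure_not_degenerate:
  assumes "pure K" "2 \<le> size (snd K)"
  shows "\<not> degenerate n K"
proof -
  obtain C M where K: "K = (C, M)"
    by (cases K)
  let ?p = "coin_outside C"
  have members: "\<not> Q \<subseteq> C" if "Q \<in># M" for Q
    using assms(1) that K by (auto simp: pure_def)
  have "(\<Sum>Q\<in>#M. Hc ?p Q C) = (\<Sum>Q\<in>#M. 1)"
    by (intro arg_cong[where f = sum_mset] image_mset_cong) (simp add: Hc_coin_outside members)
  also have "\<dots> = real (size M)"
    by (simp add: sum_mset_constant)
  finally have sum: "(\<Sum>Q\<in>#M. Hc ?p Q C) = real (size M)" .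
  have "M \<noteq> {#}"
    using assms(2) K by auto
  then obtain Q0 where "Q0 \<in># M"
    by blast
  then have "\<not> (\<Union>Q\<in>set_mset M. Q) \<subseteq> C"
    using members by blast
  then have "\<not> valid ?p K"
    using assms(2) K sum by (simp add: valid_def Hc_coin_outside)
  then show ?thesis
    using admissible_coin_outside unfolding degenerate_def by blast
qed

lemma pure_degenerate_iff: "pure K \<Longrightarrow> degenerate n K \<longleftrightarrow> size (snd K) \<le> 1"
  using degenerate_if_size_le_1 pure_not_degenerate by fastforce

lemma IK_inter_cond_empty:
  assumes "pure K"
  shows "IK K \<inter> fst K = {}"
proof -
  have "\<exists>Q\<in>#snd K. i \<in> Q" if "i \<in> IK K" for i
  proof -
    from that have "2 \<le> size (filter_mset (\<lambda>Q. i \<in> Q) (snd K))"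
      by (simp add: IK_def split: if_splits)
    then have "size (filter_mset (\<lambda>Q. i \<in> Q) (snd K)) \<noteq> 0"
      by linarith
    then show ?thesis
      by (auto simp: size_eq_0_iff_empty)
  qed
  then show ?thesis
    using assms by (fastforce simp: pure_def)
qed

lemma PK_eq_if_IK_empty:
  assumes "pure K" "IK K = {}"
  shows "PK K = snd K"
  using assms by (auto simp: PK_def pure_def filter_mset_eq_conv)

lemma can_pure:
  assumes "pure K" "2 \<le> size (snd K)"
  obtains K' where "can K = Some K'" "pure K'" "2 \<le> size (snd K')"
proof -
  let ?C = "fst K" and ?I = "IK K" and ?P = "PK K"
  have I: "?I \<inter> ?C = {}"
    using IK_inter_cond_empty[OF assms(1)] .
  have P: "pure (?C, ?P)"
    using assms(1) by (auto simp: PK_def pure_def)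
  have not_le_1: "\<not> size (snd K) \<le> 1"
    using assms(2) by simp
  consider "?I \<noteq> {}" "size ?P \<le> 1" | "?I = {}" | "?I \<noteq> {}" "\<not> size ?P \<le> 1"
    by blast
  then show ?thesis
  proof cases
    case 1
    then have "can K = Some (?C, {#?I, ?I#})"
      using not_le_1 by (simp add: can_def Let_def)
    moreover have "pure (?C, {#?I, ?I#})"
      using 1 I by (simp add: pure_def)
    ultimately show ?thesis
      by (rule that) simp
  next
    case 2
    then have "can K = Some (?C, ?P)"
      using not_le_1 by (simp add: can_def Let_def)
    moreover have "size ?P = size (snd K)"
      using PK_eq_if_IK_empty[OF assms(1) 2] by simp
    ultimately show ?thesis
      using that[of "(?C, ?P)"] P assms(2) by simp
  next
    case 3
    then have "can K = Some (?C, {#?I, ?I#} + ?P)"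
      using not_le_1 by (simp add: can_def Let_def)
    moreover have "pure (?C, {#?I, ?I#} + ?P)"
      using 3 I P by (auto simp: pure_def)
    ultimately show ?thesis
      by (rule that) simp
  qed
qed

theorem mainTheorem20:
  fixes n :: nat and K :: cmi
  assumes "cmi_on n K" and "pure K"
  shows "degenerate n K \<longleftrightarrow> is_degenerate_symbol n (can K)"
proof (cases "size (snd K) \<le> 1")
  case True
  then show ?thesis
    using degenerate_if_size_le_1 by (simp add: can_def is_degenerate_symbol_def)
next
  case False
  then have "2 \<le> size (snd K)"
    by simp
  then obtain K' where "can K = Some K'" "pure K'" "2 \<le> size (snd K')"
    using can_pure[OF assms(2)] by blast
  then show ?thesis
    using False assms(2) by (simp add: is_degenerate_symbol_def pure_degenerate_iff)
qed

end
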